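(* In $NOM$, writing $\phi\vee\psi$ for $\neg(\neg\phi\wedge\neg\psi)$ and $\phi\perp\!\!\!\perp\psi$ for $(\phi\rightarrow(\psi\rightarrow\phi))\wedge(\psi\rightarrow(\phi\rightarrow\psi))$, the following rule is derivable for every finite sequence $\Gamma$ and formulas $\phi,\psi$: from $\Gamma\vdash((\phi\wedge\psi)\vee(\phi\wedge\neg\psi))\vee((\neg\phi\wedge\psi)\vee(\neg\phi\wedge\neg\psi))$ infer $\Gamma\vdash\phi\perp\!\!\!\perp\psi$.
   Context: The propositional deductive system $NOM$: formulas are built from propositional letters using $\wedge$, $\rightarrow$, $\neg$. Sequents are $\phi_1,\ldots,\phi_n\vdash\psi$ ($n\ge0$) with antecedent a finite ordered sequence. With $\Gamma$ a finite possibly empty sequence of formulas and $\phi,\psi,\chi$ formulas, the rules of $NOM$ are: (assumption) $\Gamma,\phi\vdash\phi$; (cut) $\Gamma\vdash\phi$, $\Gamma,\phi\vdash\psi$ $\Rightarrow$ $\Gamma\vdash\psi$; (paste) $\Gamma\vdash\phi$, $\Gamma\vdash\psi$ $\Rightarrow$ $\Gamma,\phi\vdash\psi$; (compatible exchange) $\Gamma,\phi,\psi\vdash\phi$, $\Gamma,\phi,\psi\vdash\chi$, $\Gamma,\psi,\phi\vdash\psi$ $\Rightarrow$ $\Gamma,\psi,\phi\vdash\chi$; ($\wedge$-intro) $\Gamma\vdash\phi$, $\Gamma\vdash\psi$ $\Rightarrow$ $\Gamma\vdash\phi\wedge\psi$; ($\wedge$-elim) $\Gamma\vdash\phi\wedge\psi$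 $\Rightarrow$ $\Gamma\vdash\phi$ and $\Rightarrow$ $\Gamma\vdash\psi$; ($\rightarrow$-intro) $\Gamma,\phi\vdash\psi$ $\Rightarrow$ $\Gamma\vdash\phi\rightarrow\psi$; ($\rightarrow$-elim) $\Gamma\vdash\phi\rightarrow\psi$ $\Rightarrow$ $\Gamma,\phi\vdash\psi$; (excluded middle) $\Gamma,\phi\vdash\psi$, $\Gamma,\neg\phi\vdash\psi$ $\Rightarrow$ $\Gamma\vdash\psi$; (explosion) $\Gamma\vdash\neg\phi$ $\Rightarrow$ $\Gamma,\phi\vdash\psi$. A rule schema is derivable if in every instance its conclusion can be derived from its premises using these rules. *)

theory Defs
  imports Main
begin

datatype 'a form = Atom 'a | Conj "'a form" "'a form" | Imp "'a form" "'a form" | Neg "'a form"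

definition Disj :: "'a form \<Rightarrow> 'a form \<Rightarrow> 'a form" where
  "Disj p q = Neg (Conj (Neg p) (Neg q))"

definition Indep :: "'a form \<Rightarrow> 'a form \<Rightarrow> 'a form" where
  "Indep p q = Conj (Imp p (Imp q p)) (Imp q (Imp p q))"

type_synonym 'a sequent = "'a form list \<times> 'a form"

text \<open>Sequents derivable in NOM from a set H of premise sequents.
 The antecedent "Gamma, phi" is Gamma @ [phi].\<close>
inductive nom :: "'a sequent set \<Rightarrow> 'a sequent \<Rightarrow> bool" for H where
  hyp: "s \<in> H \<Longrightarrow> nom H s"
| assumption: "nom H (G @ [p], p)"
| cut: "nom H (G, p) \<Longrightarrow> nom H (G @ [p], q) \<Longrightarrow> nom H (G, q)"
| paste: "nom H (G, p) \<Longrightarrow> nom H (G, q) \<Longrightarrow> nom H (G @ [p], q)"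
| cexch: "nom H (G @ [p, q], p) \<Longrightarrow> nom H (G @ [p, q], r) \<Longrightarrow> nom H (G @ [q, p], q)
           \<Longrightarrow> nom H (G @ [q, p], r)"
| conjI: "nom H (G, p) \<Longrightarrow> nom H (G, q) \<Longrightarrow> nom H (G, Conj p q)"
| conjE1: "nom H (G, Conj p q) \<Longrightarrow> nom H (G, p)"
| conjE2: "nom H (G, Conj p q) \<Longrightarrow> nom H (G, q)"
| impI: "nom H (G @ [p], q) \<Longrightarrow> nom H (G, Imp p q)"
| impE: "nom H (G, Imp p q) \<Longrightarrow> nom H (G @ [p], q)"
| em: "nom H (G @ [p], q) \<Longrightarrow> nom H (G @ [Neg p], q) \<Longrightarrow> nom H (G, q)"
| explosion: "nom H (G, Neg p) \<Longrightarrow> nom H (G @ [p], q)"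

end

theory Submission
  imports Defs
begin

text \<open>Let P and Q be the two outer disjuncts of the hypothesis, so that P entails p and
  Q entails \<open>\<not>p\<close>. Weakening fails in NOM, but disjunctive syllogism survives in the
  form: if X entails r, Y entails \<open>\<not>r\<close> and \<open>\<Gamma> \<turnstile> X \<or> Y\<close>, then \<open>\<Gamma>, r \<turnstile> X\<close>.
  Used once on the outer disjunction and once on the inner one, it gives \<open>\<Gamma>, p, q \<turnstile> p \<and> q\<close>,
  hence \<open>\<Gamma>, p, q \<turnstile> p\<close>, and symmetrically \<open>\<Gamma>, \<not>p, q \<turnstile> \<not>p\<close>. Excluded middle on p turns
  these two sequents into both conjuncts of \<open>p \<bottom>\<bottom> q\<close>.\<close>

definition nom_inconsistent :: "'a sequent set \<Rightarrow> 'a form list \<Rightarrow> bool" where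
  "nom_inconsistent H G \<longleftrightarrow> (\<forall>z. nom H (G, z))"

lemma nom_inconsistentD: "nom_inconsistent H G \<Longrightarrow> nom H (G, z)"
  by (simp add: nom_inconsistent_def)

lemma nom_inconsistent_explosion: "nom H (G, Neg p) \<Longrightarrow> nom_inconsistent H (G @ [p])"
  by (simp add: nom_inconsistent_def nom.explosion)

lemma nom_inconsistent_snoc: "nom_inconsistent H G \<Longrightarrow> nom_inconsistent H (G @ [p])"
  by (simp add: nom_inconsistent_def nom.explosion)

lemma nom_inconsistent_cut:
  "nom H (G, p) \<Longrightarrow> nom_inconsistent H (G @ [p]) \<Longrightarrow> nom_inconsistent H G"
  by (meson nom.cut nom_inconsistent_def)

lemma nom_inconsistent_swap:
  "nom_inconsistent H (G @ [p, q]) \<Longrightarrow> nom H (G @ [q, p], q) \<Longrightarrow> nom_inconsistent H (G @ [q, p])"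
  by (simp add: nom_inconsistent_def nom.cexch)

lemma nom_negI: "nom_inconsistent H (G @ [p]) \<Longrightarrow> nom H (G, Neg p)"
  by (rule nom.em[OF _ nom.assumption]) (rule nom_inconsistentD)

lemma nom_inconsistent_modus_tollens:
  assumes neg: "nom H (G, Neg q)" and imp: "nom H (G @ [p], q)"
  shows "nom_inconsistent H (G @ [p])"
proof -
  have "nom_inconsistent H (G @ [q, p])"
    using nom_inconsistent_explosion[OF nom.explosion[OF neg]] by simp
  moreover have "nom H (G @ [p, q], p)"
    using nom.paste[OF imp nom.assumption] by simp
  ultimately have "nom_inconsistent H (G @ [p, q])"
    by (rule nom_inconsistent_swap)
  with imp show ?thesis
    using nom_inconsistent_cut[of H "G @ [p]"] by simp
qed

lemma nom_contrapos: "nom H (G, Neg q) \<Longrightarrow> nom H (G @ [p], q) \<Longrightarrow> nom H (G, Neg p)"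
  by (rule nom_negI) (rule nom_inconsistent_modus_tollens)

lemma nom_inconsistent_neg_assumption: "nom_inconsistent H (G @ [Neg p, p])"
  by (simp add: nom_inconsistent_explosion[of H "G @ [Neg p]", simplified] nom.assumption)

lemma nom_double_negE: "nom H (G @ [Neg (Neg p)], p)"
proof (rule nom.em)
  show "nom H ((G @ [Neg (Neg p)]) @ [p], p)" by (rule nom.assumption)
  show "nom H ((G @ [Neg (Neg p)]) @ [Neg p], p)" by (rule nom.explosion, rule nom.assumption)
qed

text \<open>Antecedents are ordered: \<open>G, Neg p, p\<close> is inconsistent by explosion, but
  \<open>G, p, Neg p\<close> is only shown inconsistent via compatible exchange, which first needs
  this detour through excluded middle on \<open>Neg p\<close>.\<close>

lemma nom_assumption_before_neg: "nom H (G @ [p, Neg p], p)"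
proof -
  let ?goal = "Imp p (Imp (Neg p) p)"
  have "nom_inconsistent H (G @ [Neg p, p])"
    by (rule nom_inconsistent_neg_assumption)
  then have "nom H (G @ [Neg p, p, Neg p], p)"
    using nom_inconsistent_snoc[of H "G @ [Neg p, p]"] by (simp add: nom_inconsistent_def)
  then have "nom H (G @ [Neg p], ?goal)"
    using nom.impI[of H "G @ [Neg p]"] nom.impI[of H "G @ [Neg p, p]"] by simp
  moreover have "nom H (G @ [Neg (Neg p)], ?goal)"
  proof -
    have "nom_inconsistent H (G @ [Neg (Neg p), Neg p])"
      by (rule nom_inconsistent_neg_assumption)
    then have "nom H (G @ [Neg (Neg p)], Imp (Neg p) p)"
      using nom.impI[of H "G @ [Neg (Neg p)]"] by (simp add: nom_inconsistent_def)
    then have "nom H (G @ [Neg (Neg p), p], Imp (Neg p) p)"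
      using nom.paste[OF nom_double_negE] by simp
    then show ?thesis by (rule nom.impI[of H "G @ [Neg (Neg p)]", simplified])
  qed
  ultimately have "nom H (G, ?goal)" by (rule nom.em)
  then show ?thesis
    using nom.impE[of H "G @ [p]"] nom.impE[of H G] by simp
qed

lemma nom_inconsistent_contradiction: "nom_inconsistent H (G @ [p, Neg p])"
proof (rule nom_inconsistent_swap)
  show "nom_inconsistent H (G @ [Neg p, p])"
    by (rule nom_inconsistent_neg_assumption)
  show "nom H (G @ [p, Neg p], p)" by (rule nom_assumption_before_neg)
qed

lemma nom_double_negI:
  assumes "nom H (G, p)"
  shows "nom H (G, Neg (Neg p))"
proof (rule nom.cut[OF assms])
  show "nom H (G @ [p], Neg (Neg p))"
    using nom_negI[of H "G @ [p]" "Neg p"] nom_inconsistent_contradiction[of H G p] by simp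
qed

lemma nom_inconsistent_neg_conj:
  assumes neg: "nom H (G, Neg (Conj p q))" and keep: "nom H (G @ [p, q], p)"
  shows "nom_inconsistent H (G @ [p, q])"
proof -
  have "nom_inconsistent H (G @ [Conj p q, p])"
    using nom_inconsistent_snoc[OF nom_inconsistent_explosion[OF neg]] by simp
  moreover have "nom H (G @ [p, Conj p q], p)"
    using nom.conjE1[OF nom.assumption[of H "G @ [p]" "Conj p q"]] by simp
  ultimately have "nom_inconsistent H (G @ [p, Conj p q])"
    by (rule nom_inconsistent_swap)
  then have "nom H (G @ [p], Neg (Conj p q))"
    by (rule nom_negI[of H "G @ [p]", simplified])
  moreover have "nom H (G @ [p, q], Conj p q)"
    using nom.conjI[of H "G @ [p, q]"] keep nom.assumption[of H "G @ [p]" q] by simp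
  ultimately show ?thesis
    using nom_inconsistent_modus_tollens[of H "G @ [p]"] by simp
qed

lemma nom_disjE:
  assumes left: "\<And>D. nom H (D @ [p], r)" and right: "\<And>D. nom H (D @ [q], r)"
    and disj: "nom H (G, Disj p q)"
  shows "nom H (G, r)"
proof (rule nom.em)
  show "nom H (G @ [r], r)" by (rule nom.assumption)
  have "nom H (G @ [Neg r], Conj (Neg p) (Neg q))"
    by (intro nom.conjI nom_contrapos[OF nom.assumption] left right)
  with disj show "nom H (G @ [Neg r], r)"
    unfolding Disj_def by (blast intro: nom_inconsistentD nom_inconsistent_modus_tollens)
qed

lemma nom_disj_commute:
  assumes "nom H (G, Disj p q)"
  shows "nom H (G, Disj q p)"
proof -
  have "nom H (G @ [Conj (Neg q) (Neg p)], Conj (Neg p) (Neg q))"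
    by (intro nom.conjI nom.conjE2[OF nom.assumption] nom.conjE1[OF nom.assumption])
  with assms show ?thesis
    unfolding Disj_def by (rule nom_contrapos)
qed

text \<open>Without weakening, \<open>Neg p\<close> need not stay derivable once \<open>Neg q\<close> is assumed after it;
  exclusivity of p and q is what makes compatible exchange applicable.\<close>

lemma nom_neg_assumption_kept:
  assumes excl: "\<And>D. nom H (D @ [p], Neg q)"
  shows "nom H (G @ [Neg p, Neg q], Neg p)"
proof (rule nom.em[of H _ p])
  show "nom H ((G @ [Neg p, Neg q]) @ [Neg p], Neg p)" by (rule nom.assumption)
  have "nom H (G @ [Neg p, p, Neg q], p)"
    using nom.paste[of H "G @ [Neg p, p]" "Neg q" p] excl[of "G @ [Neg p]"]
      nom.assumption[of H "G @ [Neg p]" p] by simp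
  moreover have "nom H (G @ [Neg p, p, Neg q], Neg p)"
    using nom_inconsistent_snoc[OF nom_inconsistent_neg_assumption[of H G p], of "Neg q"]
    by (simp add: nom_inconsistent_def)
  moreover have "nom H (G @ [Neg p, Neg q, p], Neg q)"
    using excl[of "G @ [Neg p, Neg q]"] by simp
  ultimately show "nom H ((G @ [Neg p, Neg q]) @ [p], Neg p)"
    using nom.cexch[of H "G @ [Neg p]" p "Neg q" "Neg p"] by simp
qed

lemma nom_disj_select:
  assumes left: "\<And>D. nom H (D @ [p], r)" and right: "\<And>D. nom H (D @ [q], Neg r)"
    and disj: "nom H (G, Disj p q)"
  shows "nom H (G @ [r], p)"
proof -
  have excl: "\<And>D. nom H (D @ [p], Neg q)"
    by (rule nom_contrapos[OF nom_double_negI[OF left] right])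
  have "nom H (G, Imp r p)"
  proof (rule nom.em)
    show "nom H (G @ [p], Imp r p)"
      by (rule nom.impI, rule nom.paste[OF left nom.assumption])
    have "nom_inconsistent H (G @ [Neg p, Neg q])"
      using disj nom_neg_assumption_kept[OF excl]
      unfolding Disj_def by (rule nom_inconsistent_neg_conj)
    then have "nom H (G @ [Neg p, Neg q], Imp r p)" by (rule nom_inconsistentD)
    moreover have "nom H ((G @ [Neg p]) @ [q], Imp r p)"
      by (rule nom.impI, rule nom.explosion, rule right)
    ultimately show "nom H (G @ [Neg p], Imp r p)"
      using nom.em[of H "G @ [Neg p]" q] by simp
  qed
  then show ?thesis by (rule nom.impE)
qed

lemma nom_conj_select:
  assumes "nom H (G, Disj (Conj p q) (Conj r (Neg q)))"
  shows "nom H (G @ [q], p)"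
proof -
  have "nom H (G @ [q], Conj p q)"
    using nom.conjE2[OF nom.assumption] nom.conjE2[OF nom.assumption] assms
    by (rule nom_disj_select)
  then show ?thesis by (rule nom.conjE1)
qed

lemma nom_IndepI:
  assumes pos: "nom H (G @ [p, q], p)" and neg: "nom H (G @ [Neg p, q], Neg p)"
  shows "nom H (G, Indep p q)"
proof -
  have "nom H (G, Imp p (Imp q p))"
  proof (rule nom.em)
    have "nom H (G @ [p], Imp q p)"
      using nom.impI[of H "G @ [p]"] pos by simp
    then show "nom H (G @ [p], Imp p (Imp q p))"
      by (rule nom.impI[OF nom.paste[OF nom.assumption]])
    show "nom H (G @ [Neg p], Imp p (Imp q p))"
      by (rule nom.impI, rule nom.explosion, rule nom.assumption)
  qed
  moreover have "nom H (G, Imp q (Imp p q))"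
  proof (rule nom.em)
    have "nom H (G @ [p, q, p], q)"
      using nom.paste[of H "G @ [p, q]" p q] pos nom.assumption[of H "G @ [p]" q] by simp
    then show "nom H (G @ [p], Imp q (Imp p q))"
      using nom.impI[of H "G @ [p]"] nom.impI[of H "G @ [p, q]"] by simp
    have "nom H (G @ [Neg p, q, p], q)"
      using nom.explosion[of H "G @ [Neg p, q]" p q] neg by simp
    then show "nom H (G @ [Neg p], Imp q (Imp p q))"
      using nom.impI[of H "G @ [Neg p]"] nom.impI[of H "G @ [Neg p, q]"] by simp
  qed
  ultimately show ?thesis
    unfolding Indep_def by (rule nom.conjI)
qed

theorem proposition4p14:
  fixes G :: "'a form list" and p q :: "'a form"
  shows "nom {(G, Disj (Disj (Conj p q) (Conj p (Neg q)))
                        (Disj (Conj (Neg p) q) (Conj (Neg p) (Neg q))))}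
             (G, Indep p q)"
    (is "nom ?H _")
proof -
  define P where "P = Disj (Conj p q) (Conj p (Neg q))"
  define Q where "Q = Disj (Conj (Neg p) q) (Conj (Neg p) (Neg q))"
  have disj: "nom ?H (G, Disj P Q)"
    unfolding P_def Q_def by (rule nom.hyp) simp
  have P_pos: "nom ?H (D @ [P], p)" for D
    unfolding P_def by (rule nom_disjE[OF _ _ nom.assumption]) (rule nom.conjE1, rule nom.assumption)+
  have Q_neg: "nom ?H (D @ [Q], Neg p)" for D
    unfolding Q_def by (rule nom_disjE[OF _ _ nom.assumption]) (rule nom.conjE1, rule nom.assumption)+
  have "nom ?H (G @ [p], P)"
    using P_pos Q_neg disj by (rule nom_disj_select)
  then have pos: "nom ?H (G @ [p, q], p)"
    unfolding P_def using nom_conj_select[of ?H "G @ [p]"] by simp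
  have "nom ?H (G @ [Neg p], Q)"
    using Q_neg nom_double_negI[OF P_pos] nom_disj_commute[OF disj] by (rule nom_disj_select)
  then have neg: "nom ?H (G @ [Neg p, q], Neg p)"
    unfolding Q_def using nom_conj_select[of ?H "G @ [Neg p]"] by simp
  from pos neg show ?thesis by (rule nom_IndepI)
qed

end
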